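(* Consider $\min_{y\in\mathbb R^{n_y}}\sum_{i\in\mathcal I}f_i(y)$ with nonempty solution set $\mathcal Y^\star$, where each $f_i:\mathbb R^{n_y}\to\mathbb R$ depends only on $(y_p)_{p\in\mathcal N(i)}$, and the push-sum iteration described in the context. Assume: for all $k$ and $p$, (i) every $i\in\mathcal V_p$ has a self-loop in $\mathcal G^{\mathrm D,k}_p$, (ii) $\mathbf 1_{N_p}^\top W^k_p=\mathbf 1_{N_p}^\top$, (iii) $[W^k_p]_{i_p,j_p}\ge\nu$ for every edge from $j$ to $i$ in $\mathcal G^{\mathrm D,k}_p$, for some $\nu>0$; there is an integer $Q>0$ such that for every $p$ the graph $\bigcup_{t=kQ}^{(k+1)Q-1}\mathcal G^{\mathrm D,t}_p$ is strongly connected for all $k$; each $f_i$ is convex and there is $L>0$ with $\|g\|\le L$ for all $y$ and all $g\in\partial f_i(y)$; $(\gamma^k)$ is positive and non-increasing with $\sum_k\gamma^k=\infty$, $\sum_k(\gamma^k)^2<\infty$. Then the estimates converge to a common solution: there is $y^\star\in\mathcal Y^\star$ such that $\boldsymbol y^k_{i,p}\to y^\star_p$ for all $p$ and all $i\in\mathcal V_p$.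
   Context: Agents $\mathcal I=\{1,\dots,I\}$; $y=\mathrm{col}((y_p)_{p\in\mathcal P})$, $y_p\in\mathbb R^{n_{y_p}}$; $\mathcal N(i)$ is the set of blocks on which $f_i$ depends. For each $p$, a fixed set $\mathcal V_p\subseteq\mathcal I$ with $\{i:p\in\mathcal N(i)\}\subseteq\mathcal V_p$, $N_p=|\mathcal V_p|$, $i_p$ the position of $i$ in $\mathcal V_p$. For each $k$, $\mathcal G^{\mathrm D,k}_p$ is a directed graph on $\mathcal V_p$ (a subgraph of the time-$k$ communication graph) with compliant weight matrix $W^k_p\in\mathbb R^{N_p\times N_p}$ ($[W^k_p]_{i_p,j_p}>0$ iff there is an edge from $j$ to $i$, else $0$). A union of graphs on the same vertex set takes the union of edges. Iteration: for all $i$ and $p$ with $i\in\mathcal V_p$, initialize $\boldsymbol z^0_{i,p}\in\mathbb R^{n_{y_p}}$ arbitrary, $q^0_{i,p}=1$, and for $k\ge0$: $q^{k+1}_{i,p}=\sum_{j\in\mathcal V_p}[W^k_p]_{i_p,j_p}q^k_{j,p}$; $\boldsymbol w^{k+1}_{i,p}=\sum_{j\in\mathcal V_p}[W^k_p]_{i_p,j_p}\boldsymbol z^k_{j,p}$; $\boldsymbol y^{k+1}_{i,p}=\boldsymbol w^{k+1}_{i,p}/q^{k+1}_{i,p}$; $\boldsymbol z^{k+1}_{i,p}=\boldsymbol w^{k+1}_{i,p}-\gamma^k\boldsymbol g^{k+1}_{i,p}$, where $\boldsymbol g^{k+1}_{i,p}$ is the $y_p$-block of a subgradient of $f_i$ at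 $\tilde{\boldsymbol y}^{k+1}_i$, i.e., at the point whose block $p$ is $\boldsymbol y^{k+1}_{i,p}$ for the blocks $p$ with $i\in\mathcal V_p$ (on which $f_i$ depends). *)

theory Defs
  imports "HOL-Analysis.Analysis"
begin

text \<open>The decision vector y lives in R^{n_y}, modelled as real^'c with a finite
coordinate type 'c; each coordinate c belongs to the block blk c. The block y_p
is the restriction of y to the coordinates c with blk c = p.\<close>

definition subgradient :: "(real^'c \<Rightarrow> real) \<Rightarrow> real^'c \<Rightarrow> real^'c \<Rightarrow> bool" where
  "subgradient f y g \<longleftrightarrow> (\<forall>z. f z \<ge> f y + g \<bullet> (z - y))"

definition blockproj :: "('c \<Rightarrow> 'p) \<Rightarrow> 'p \<Rightarrow> real^'c \<Rightarrow> real^'c" where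
  "blockproj blk p v = (\<chi> c. if blk c = p then v $ c else 0)"

end

theory Submission
  imports Defs
begin

text \<open>
  The push-sum weights q stay between a positive constant and N_p: column stochasticity
  preserves their sum, and joint strong connectivity over every window of 2Q steps spreads a
  weight at least 1 to all agents. Consequently the normalised estimates y_{i,p} evolve by
  row-stochastic averaging with mixing weights bounded below, perturbed only by the
  subgradient steps of size O(gamma_k). Their spread over V_p therefore contracts
  geometrically up to O(gamma_k): it tends to 0 and is summable against gamma_k.

  The average over V_p of the z_{i,p} performs an exact subgradient step on the total cost,
  with step gamma_k / N_p, and with subgradients taken at points that differ from the average
  by at most the spread. In the squared norm weighted by N_p this is a quasi-Fejer
  inequality with summable error, which forces the averages, and with them every estimate,
  to converge to one minimiser.
\<close>

section \<open>Subgradients of convex functions\<close>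

lemma subgradient_exists:
  fixes f :: "real^'c::finite \<Rightarrow> real"
  assumes "convex_on UNIV f"
  shows "\<exists>g. subgradient f x g"
proof -
  define S :: "((real^'c) \<times> real) set" where "S = {x} \<times> {..<f x}"
  define T where "T = epigraph UNIV f"
  have "convex S" unfolding S_def by (intro convex_Times) auto
  moreover have "convex T" unfolding T_def using assms convex_epigraph by blast
  moreover have "S \<noteq> {}" "T \<noteq> {}" unfolding S_def T_def epigraph_def
    by (auto intro!: exI[of _ "f x - 1"]) (auto intro!: exI[of _ "(x, f x)"])
  moreover have "S \<inter> T = {}" unfolding S_def T_def epigraph_def by auto
  ultimately obtain a b where "a \<noteq> 0" and aS: "\<forall>u\<in>S. a \<bullet> u \<le> b" and aT: "\<forall>u\<in>T. a \<bullet> u \<ge> b"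
    using separating_hyperplane_sets by metis
  moreover obtain a1 a2 where a: "a = (a1, a2)" by (cases a)
  ultimately have a_ne: "(a1, a2) \<noteq> 0" by simp
  have below: "a1 \<bullet> x + a2 * s \<le> b" if "s < f x" for s
    using aS that unfolding S_def a by (auto simp: inner_Pair)
  have above: "a1 \<bullet> u + a2 * s \<ge> b" if "s \<ge> f u" for u s
    using aT that unfolding T_def epigraph_def a by (auto simp: inner_Pair)
  have "a2 * (f x - 1) \<le> a2 * f x" using below[of "f x - 1"] above[of x "f x"] by auto
  hence "a2 \<ge> 0" by (simp add: algebra_simps)
  \<comment> \<open>A vertical hyperplane cannot have the whole epigraph on one side.\<close>
  have a2_pos: "a2 > 0"
  proof (rule ccontr)
    assume "\<not> a2 > 0"
    with \<open>a2 \<ge> 0\<close> have "a2 = 0" by simp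
    with a_ne have "a1 \<noteq> 0" by (simp add: zero_prod_def)
    have "a1 \<bullet> x \<le> b" using below[of "f x - 1"] \<open>a2 = 0\<close> by simp
    moreover have "a1 \<bullet> (x - a1) \<ge> b" using above[of "x - a1" "f (x - a1)"] \<open>a2 = 0\<close> by simp
    ultimately have "a1 \<bullet> a1 \<le> 0" by (simp add: inner_diff_right)
    with \<open>a1 \<noteq> 0\<close> show False by (metis inner_eq_zero_iff inner_ge_zero order_antisym)
  qed
  have "a1 \<bullet> x + a2 * f x \<le> b"
  proof (rule ccontr)
    assume gt: "\<not> ?thesis"
    define s where "s = f x - (a1 \<bullet> x + a2 * f x - b) / (2 * a2)"
    have "s < f x" unfolding s_def using gt a2_pos by (simp add: field_simps)
    moreover have "a2 * s = a2 * f x - (a1 \<bullet> x + a2 * f x - b) / 2"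
      unfolding s_def using a2_pos by (simp add: field_simps)
    ultimately show False using below[of s] gt by (simp add: field_simps)
  qed
  then have "f x + (- (1 / a2) *\<^sub>R a1) \<bullet> (u - x) \<le> f u" for u
    using above[of u "f u"] a2_pos by (simp add: inner_diff_right field_simps)
  then show ?thesis unfolding subgradient_def by blast
qed

lemma subgradient_component_eq_0:
  fixes f :: "real^'c::finite \<Rightarrow> real"
  assumes "subgradient f y g"
    and depends: "\<And>u v. (\<forall>c. P c \<longrightarrow> u $ c = v $ c) \<Longrightarrow> f u = f v"
    and "\<not> P c"
  shows "g $ c = 0"
proof -
  define u where "u = y + axis c (g $ c)"
  have "f u = f y" by (rule depends) (auto simp: u_def axis_def \<open>\<not> P c\<close>)
  moreover have "f u \<ge> f y + g \<bullet> (u - y)" using assms(1) unfolding subgradient_def by blast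
  moreover have "g \<bullet> (u - y) = (g $ c)\<^sup>2" by (simp add: u_def inner_axis power2_eq_square)
  ultimately show ?thesis by simp
qed

lemma abs_inner_le_sum_support:
  fixes g x :: "real^'c::finite"
  assumes "\<And>c. \<not> P c \<Longrightarrow> g $ c = 0" and "\<And>c. \<bar>g $ c\<bar> \<le> L"
  shows "\<bar>g \<bullet> x\<bar> \<le> L * (\<Sum>c | P c. \<bar>x $ c\<bar>)"
proof -
  have "g \<bullet> x = (\<Sum>c\<in>UNIV. g $ c * x $ c)" by (simp add: inner_vec_def)
  also have "\<dots> = (\<Sum>c | P c. g $ c * x $ c)" by (rule sum.mono_neutral_right) (auto simp: assms(1))
  finally have "\<bar>g \<bullet> x\<bar> = \<bar>\<Sum>c | P c. g $ c * x $ c\<bar>" by simp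
  also have "\<dots> \<le> (\<Sum>c | P c. \<bar>g $ c * x $ c\<bar>)" by (rule sum_abs)
  also have "\<dots> \<le> (\<Sum>c | P c. L * \<bar>x $ c\<bar>)"
    by (rule sum_mono) (simp add: abs_mult assms(2) mult_right_mono)
  finally show ?thesis by (simp add: sum_distrib_left)
qed

lemma convex_diff_le_dependent_coords:
  fixes f :: "real^'c::finite \<Rightarrow> real"
  assumes "convex_on UNIV f"
    and depends: "\<And>u v. (\<forall>c. P c \<longrightarrow> u $ c = v $ c) \<Longrightarrow> f u = f v"
    and bounded: "\<And>u g. subgradient f u g \<Longrightarrow> norm g \<le> L"
  shows "f u - f v \<le> L * (\<Sum>c | P c. \<bar>u $ c - v $ c\<bar>)"
proof -
  obtain g where g: "subgradient f u g" using subgradient_exists[OF assms(1)] by blast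
  have "\<bar>g $ c\<bar> \<le> L" for c using component_le_norm_cart[of g c] bounded[OF g] by linarith
  with subgradient_component_eq_0[OF g depends]
  have "\<bar>g \<bullet> (u - v)\<bar> \<le> L * (\<Sum>c | P c. \<bar>(u - v) $ c\<bar>)"
    by (rule abs_inner_le_sum_support)
  moreover have "f v \<ge> f u + g \<bullet> (v - u)" using g unfolding subgradient_def by blast
  moreover have "g \<bullet> (v - u) = - (g \<bullet> (u - v))" by (simp add: inner_diff_right)
  ultimately show ?thesis by simp
qed

section \<open>Reachability in time-varying graphs\<close>

definition jointly_strongly_connected :: "'a set \<Rightarrow> (nat \<Rightarrow> ('a \<times> 'a) set) \<Rightarrow> nat \<Rightarrow> bool" where
  "jointly_strongly_connected V E K \<longleftrightarrow>
     (\<forall>T. \<forall>i\<in>V. \<forall>j\<in>V. (i, j) \<in> (\<Union>t\<in>{T..<T + K}. E t)\<^sup>*)"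

lemma jointly_strongly_connected_shift:
  assumes "jointly_strongly_connected V E K"
  shows "jointly_strongly_connected V (\<lambda>t. E (t + s)) K"
proof -
  have "(\<lambda>t. t + s) ` {T..<T + K} = {T + s..<T + s + K}" for T by (simp add: algebra_simps)
  then have "(\<Union>t\<in>{T..<T + K}. E (t + s)) = (\<Union>t\<in>{T + s..<T + s + K}. E t)" for T
    by (metis image_image)
  with assms show ?thesis unfolding jointly_strongly_connected_def by metis
qed

lemma jointly_strongly_connected_if_periodic:
  assumes "Q > 0"
    and conn: "\<And>k i j. i \<in> V \<Longrightarrow> j \<in> V \<Longrightarrow> (i, j) \<in> (\<Union>t\<in>{k * Q..<Suc k * Q}. E t)\<^sup>*"
  shows "jointly_strongly_connected V E (2 * Q)"
  unfolding jointly_strongly_connected_def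
proof (intro allI ballI)
  fix T i j assume "i \<in> V" "j \<in> V"
  define k where "k = T div Q + 1"
  \<comment> \<open>Any 2Q consecutive instants contain a whole period.\<close>
  have "k * Q = T div Q * Q + Q" "Suc k * Q = k * Q + Q" by (simp_all add: k_def)
  then have "T \<le> k * Q" "Suc k * Q \<le> T + 2 * Q"
    using div_mult_mod_eq[of T Q] mod_less_divisor[OF \<open>Q > 0\<close>, of T] by linarith+
  then have "(\<Union>t\<in>{k * Q..<Suc k * Q}. E t) \<subseteq> (\<Union>t\<in>{T..<T + 2 * Q}. E t)"
    by (intro UN_mono) auto
  then show "(i, j) \<in> (\<Union>t\<in>{T..<T + 2 * Q}. E t)\<^sup>*"
    using conn[OF \<open>i \<in> V\<close> \<open>j \<in> V\<close>, of k] rtrancl_mono by blast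
qed

fun reach :: "'a set \<Rightarrow> (nat \<Rightarrow> ('a \<times> 'a) set) \<Rightarrow> 'a \<Rightarrow> nat \<Rightarrow> 'a set" where
  "reach V E j 0 = {j}"
| "reach V E j (Suc d) = reach V E j d \<union> {i \<in> V. \<exists>l\<in>reach V E j d. (l, i) \<in> E d}"

lemma reach_subset: "j \<in> V \<Longrightarrow> reach V E j d \<subseteq> V"
  by (induction d) auto

lemma reach_mono: "d \<le> d' \<Longrightarrow> reach V E j d \<subseteq> reach V E j d'"
  by (induction d' rule: dec_induct) auto

lemma start_in_reach: "j \<in> reach V E j d"
  using reach_mono[of 0 d] by auto

lemma reach_SucE:
  assumes "i \<in> reach V E j (Suc d)" and "j \<in> V" and self_loops: "\<And>t i. i \<in> V \<Longrightarrow> (i, i) \<in> E t"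
  obtains l where "l \<in> reach V E j d" and "(l, i) \<in> E d"
  using assms reach_subset[OF \<open>j \<in> V\<close>, of E d] by auto

lemma rtrancl_leaves_set:
  assumes "(x, y) \<in> r\<^sup>*" "x \<in> A" "y \<notin> A"
  shows "\<exists>u v. (u, v) \<in> r \<and> u \<in> A \<and> v \<notin> A"
  using assms by (induction rule: rtrancl_induct) auto

lemma reach_card_grows:
  assumes "finite V" "j \<in> V" and E_sub: "\<And>t. E t \<subseteq> V \<times> V"
    and conn: "jointly_strongly_connected V E K"
    and "reach V E j d \<noteq> V"
  shows "card (reach V E j d) < card (reach V E j (d + K))"
proof -
  let ?R = "reach V E j d"
  obtain y where "y \<in> V" "y \<notin> ?R"
    using \<open>?R \<noteq> V\<close> reach_subset[OF \<open>j \<in> V\<close>, of E d] by blast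
  with conn \<open>j \<in> V\<close> have "(j, y) \<in> (\<Union>t\<in>{d..<d + K}. E t)\<^sup>*"
    unfolding jointly_strongly_connected_def by blast
  from rtrancl_leaves_set[OF this start_in_reach \<open>y \<notin> ?R\<close>]
  obtain u v t where "(u, v) \<in> E t" "d \<le> t" "t < d + K" "u \<in> ?R" "v \<notin> ?R"
    by auto
  moreover from this have "u \<in> reach V E j t" using reach_mono[of d t V E j] by (meson subsetD)
  ultimately have "v \<in> reach V E j (Suc t)" using E_sub[of t] by auto
  moreover have "Suc t \<le> d + K" using \<open>t < d + K\<close> by simp
  ultimately have "v \<in> reach V E j (d + K)" using reach_mono[of "Suc t" "d + K" V E j] by (meson subsetD)
  with \<open>v \<notin> ?R\<close> have "?R \<subset> reach V E j (d + K)" using reach_mono[of d "d + K" V E j] by auto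
  then show ?thesis
    using psubset_card_mono finite_subset[OF reach_subset[OF \<open>j \<in> V\<close>] \<open>finite V\<close>] by blast
qed

lemma reach_eq:
  assumes "finite V" "j \<in> V" "\<And>t. E t \<subseteq> V \<times> V" "jointly_strongly_connected V E K"
  shows "reach V E j (card V * K) = V"
proof -
  have "reach V E j (n * K) = V \<or> n < card (reach V E j (n * K))" for n
  proof (induction n)
    case (Suc n)
    show ?case
    proof (cases "reach V E j (n * K) = V")
      case True
      then show ?thesis
        using reach_mono[of "n * K" "Suc n * K" V E j] reach_subset[OF \<open>j \<in> V\<close>, of E "Suc n * K"]
        by auto
    next
      case False
      with Suc.IH have "Suc n \<le> card (reach V E j (n * K))" by simp
      also have "\<dots> < card (reach V E j (Suc n * K))"
        using reach_card_grows[OF assms False] by (simp add: add.commute)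
      finally show ?thesis by simp
    qed
  qed simp
  moreover have "card (reach V E j (card V * K)) \<le> card V"
    using card_mono[OF \<open>finite V\<close> reach_subset[OF \<open>j \<in> V\<close>]] .
  ultimately show ?thesis by (meson leD)
qed

section \<open>Perturbed averaging\<close>

lemma averaging_nonneg:
  fixes x :: "nat \<Rightarrow> 'a \<Rightarrow> real"
  assumes A_nonneg: "\<And>t i l. i \<in> V \<Longrightarrow> l \<in> V \<Longrightarrow> A t i l \<ge> 0"
    and step: "\<And>t i. i \<in> V \<Longrightarrow> x (Suc t) i \<ge> (\<Sum>l\<in>V. A t i l * x t l)"
    and init: "\<And>l. l \<in> V \<Longrightarrow> x 0 l \<ge> 0"
  shows "i \<in> V \<Longrightarrow> x t i \<ge> 0"
proof (induction t arbitrary: i)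
  case (Suc t)
  have "0 \<le> (\<Sum>l\<in>V. A t i l * x t l)"
    using A_nonneg Suc by (intro sum_nonneg mult_nonneg_nonneg) auto
  with step[OF Suc.prems, of t] show ?case by linarith
qed (rule init)

lemma reach_lower_bound:
  fixes x :: "nat \<Rightarrow> 'a \<Rightarrow> real"
  assumes "finite V" "j \<in> V"
    and A_nonneg: "\<And>t i l. i \<in> V \<Longrightarrow> l \<in> V \<Longrightarrow> A t i l \<ge> 0"
    and A_edge: "\<And>t i l. i \<in> V \<Longrightarrow> l \<in> V \<Longrightarrow> (l, i) \<in> E t \<Longrightarrow> A t i l \<ge> \<eta>" and "\<eta> \<ge> 0"
    and self_loops: "\<And>t i. i \<in> V \<Longrightarrow> (i, i) \<in> E t"
    and step: "\<And>t i. i \<in> V \<Longrightarrow> x (Suc t) i \<ge> (\<Sum>l\<in>V. A t i l * x t l)"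
    and init: "\<And>l. l \<in> V \<Longrightarrow> x 0 l \<ge> 0"
  shows "i \<in> reach V E j d \<Longrightarrow> x d i \<ge> \<eta> ^ d * x 0 j"
proof (induction d arbitrary: i)
  case (Suc d)
  have nonneg: "x t l \<ge> 0" if "l \<in> V" for t l
    using averaging_nonneg[OF A_nonneg step init that] .
  have "i \<in> V" using Suc.prems reach_subset[OF \<open>j \<in> V\<close>] by blast
  obtain l where l: "l \<in> reach V E j d" "(l, i) \<in> E d"
    using reach_SucE[OF Suc.prems \<open>j \<in> V\<close> self_loops] by blast
  then have "l \<in> V" using reach_subset[OF \<open>j \<in> V\<close>] by blast
  have "\<eta> ^ Suc d * x 0 j = \<eta> * (\<eta> ^ d * x 0 j)" by simp
  also have "\<dots> \<le> A d i l * x d l"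
    using A_edge[OF \<open>i \<in> V\<close> \<open>l \<in> V\<close> l(2)] Suc.IH[OF l(1)] \<open>\<eta> \<ge> 0\<close> nonneg[OF \<open>j \<in> V\<close>]
      nonneg[OF \<open>l \<in> V\<close>] by (intro mult_mono) auto
  also have "\<dots> \<le> (\<Sum>l\<in>V. A d i l * x d l)"
    using \<open>l \<in> V\<close> \<open>i \<in> V\<close> \<open>finite V\<close> A_nonneg nonneg by (intro member_le_sum) auto
  also have "\<dots> \<le> x (Suc d) i" by (rule step[OF \<open>i \<in> V\<close>])
  finally show ?case .
qed simp

lemma perturbed_averaging_lower_bound:
  fixes x :: "nat \<Rightarrow> 'a \<Rightarrow> real"
  assumes "finite V" "j \<in> V"
    and A_nonneg: "\<And>t i l. i \<in> V \<Longrightarrow> l \<in> V \<Longrightarrow> A t i l \<ge> 0"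
    and A_stochastic: "\<And>t i. i \<in> V \<Longrightarrow> (\<Sum>l\<in>V. A t i l) = 1"
    and A_edge: "\<And>t i l. i \<in> V \<Longrightarrow> l \<in> V \<Longrightarrow> (l, i) \<in> E t \<Longrightarrow> A t i l \<ge> \<eta>" and "\<eta> \<ge> 0"
    and self_loops: "\<And>t i. i \<in> V \<Longrightarrow> (i, i) \<in> E t"
    and step: "\<And>t i. i \<in> V \<Longrightarrow> x (Suc t) i \<ge> (\<Sum>l\<in>V. A t i l * x t l) - \<epsilon> t"
    and init: "\<And>l. l \<in> V \<Longrightarrow> x 0 l \<ge> m"
    and "i \<in> reach V E j d"
  shows "x d i \<ge> m + \<eta> ^ d * (x 0 j - m) - (\<Sum>u<d. \<epsilon> u)"
proof -
  \<comment> \<open>Shifting by the accumulated perturbation turns this into the unperturbed case.\<close>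
  define z where "z t l = x t l - m + (\<Sum>u<t. \<epsilon> u)" for t l
  have z_step: "z (Suc t) i \<ge> (\<Sum>l\<in>V. A t i l * z t l)" if "i \<in> V" for t i
  proof -
    have "(\<Sum>l\<in>V. A t i l * z t l) = (\<Sum>l\<in>V. A t i l * x t l + A t i l * ((\<Sum>u<t. \<epsilon> u) - m))"
      by (simp add: z_def algebra_simps)
    also have "\<dots> = (\<Sum>l\<in>V. A t i l * x t l) + (\<Sum>l\<in>V. A t i l) * ((\<Sum>u<t. \<epsilon> u) - m)"
      by (simp add: sum.distrib sum_distrib_right)
    moreover have "z (Suc t) i = x (Suc t) i - m + (\<Sum>u<t. \<epsilon> u) + \<epsilon> t" by (simp add: z_def)
    ultimately show ?thesis using step[OF that, of t] A_stochastic[OF that, of t] by simp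
  qed
  have "z d i \<ge> \<eta> ^ d * z 0 j"
    by (rule reach_lower_bound[where x = z, OF assms(1,2) A_nonneg A_edge \<open>\<eta> \<ge> 0\<close> self_loops])
      (use z_step init \<open>i \<in> reach V E j d\<close> in \<open>auto simp: z_def\<close>)
  then show ?thesis by (simp add: z_def)
qed

definition spread :: "('a \<Rightarrow> real) \<Rightarrow> 'a set \<Rightarrow> real" where
  "spread x V = (if V = {} then 0 else Max (x ` V) - Min (x ` V))"

lemma spread_nonneg:
  assumes "finite V"
  shows "spread x V \<ge> 0"
proof (cases "V = {}")
  case False
  then obtain i where "i \<in> V" by blast
  with assms have "Min (x ` V) \<le> x i" "x i \<le> Max (x ` V)" by auto
  then show ?thesis unfolding spread_def by simp
qed (simp add: spread_def)

lemma spread_le: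
  assumes "finite V" "V \<noteq> {}" "\<And>i. i \<in> V \<Longrightarrow> lo \<le> x i \<and> x i \<le> hi"
  shows "spread x V \<le> hi - lo"
proof -
  have "Max (x ` V) \<le> hi" "lo \<le> Min (x ` V)" using assms by auto
  then show ?thesis using assms(2) unfolding spread_def by simp
qed

lemma abs_diff_convex_comb_le_spread:
  assumes "finite V" "i \<in> V" "\<And>l. l \<in> V \<Longrightarrow> a l \<ge> 0" "(\<Sum>l\<in>V. a l) = 1"
  shows "\<bar>x i - (\<Sum>l\<in>V. a l * x l)\<bar> \<le> spread x V"
proof -
  let ?m = "Min (x ` V)" and ?M = "Max (x ` V)"
  have "(\<Sum>l\<in>V. a l * ?m) \<le> (\<Sum>l\<in>V. a l * x l)" "(\<Sum>l\<in>V. a l * x l) \<le> (\<Sum>l\<in>V. a l * ?M)"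
    using assms by (auto intro!: sum_mono mult_left_mono)
  moreover have "(\<Sum>l\<in>V. a l * c) = c" for c using assms(4) by (simp add: sum_distrib_right[symmetric])
  moreover have "?m \<le> x i" "x i \<le> ?M" using assms(1,2) by auto
  ultimately show ?thesis using assms(2) unfolding spread_def by auto
qed

lemma spread_contraction:
  fixes x e :: "nat \<Rightarrow> 'a \<Rightarrow> real"
  assumes "finite V"
    and A_nonneg: "\<And>t i l. i \<in> V \<Longrightarrow> l \<in> V \<Longrightarrow> A t i l \<ge> 0"
    and A_stochastic: "\<And>t i. i \<in> V \<Longrightarrow> (\<Sum>l\<in>V. A t i l) = 1"
    and A_edge: "\<And>t i l. i \<in> V \<Longrightarrow> l \<in> V \<Longrightarrow> (l, i) \<in> E t \<Longrightarrow> A t i l \<ge> \<eta>" and "\<eta> \<ge> 0"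
    and self_loops: "\<And>t i. i \<in> V \<Longrightarrow> (i, i) \<in> E t"
    and E_sub: "\<And>t. E t \<subseteq> V \<times> V" and conn: "jointly_strongly_connected V E K"
    and step: "\<And>t i. i \<in> V \<Longrightarrow> x (Suc t) i = (\<Sum>l\<in>V. A t i l * x t l) + e t i"
    and e_bound: "\<And>t i. i \<in> V \<Longrightarrow> \<bar>e t i\<bar> \<le> \<epsilon> t"
  defines "M \<equiv> card V * K"
  shows "spread (x M) V \<le> (1 - \<eta> ^ M) * spread (x 0) V + 2 * (\<Sum>u<M. \<epsilon> u)"
proof (cases "V = {}")
  case True
  then show ?thesis by (simp add: spread_def M_def)
next
  case False
  then obtain j where "j \<in> V" by blast
  let ?m = "Min (x 0 ` V)" and ?M = "Max (x 0 ` V)" and ?S = "\<Sum>u<M. \<epsilon> u"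
  have full: "reach V E j M = V" unfolding M_def using reach_eq[OF \<open>finite V\<close> \<open>j \<in> V\<close> E_sub conn] .
  have lower: "x M i \<ge> ?m + \<eta> ^ M * (x 0 j - ?m) - ?S" if "i \<in> V" for i
  proof (rule perturbed_averaging_lower_bound[OF \<open>finite V\<close> \<open>j \<in> V\<close> A_nonneg A_stochastic A_edge \<open>\<eta> \<ge> 0\<close> self_loops])
    show "x (Suc t) i \<ge> (\<Sum>l\<in>V. A t i l * x t l) - \<epsilon> t" if "i \<in> V" for t i
      using step[OF that, of t] e_bound[OF that, of t] by linarith
  qed (use \<open>finite V\<close> full that in auto)
  have upper: "- x M i \<ge> - ?M + \<eta> ^ M * (- x 0 j - - ?M) - ?S" if "i \<in> V" for i
  proof (rule perturbed_averaging_lower_bound[OF \<open>finite V\<close> \<open>j \<in> V\<close> A_nonneg A_stochastic A_edge \<open>\<eta> \<ge> 0\<close> self_loops])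
    show "- x (Suc t) i \<ge> (\<Sum>l\<in>V. A t i l * - x t l) - \<epsilon> t" if "i \<in> V" for t i
      using step[OF that, of t] e_bound[OF that, of t] by (simp add: sum_negf)
  qed (use \<open>finite V\<close> full that in auto)
  have "spread (x M) V \<le> (?M - \<eta> ^ M * (?M - x 0 j) + ?S) - (?m + \<eta> ^ M * (x 0 j - ?m) - ?S)"
    using lower upper by (intro spread_le[OF \<open>finite V\<close> False]) (auto simp: algebra_simps)
  also have "\<dots> = (1 - \<eta> ^ M) * spread (x 0) V + 2 * ?S"
    using False by (simp add: spread_def algebra_simps)
  finally show ?thesis .
qed

section \<open>Scalar recursions\<close>

lemma iterated_contraction_bound:
  fixes a :: "nat \<Rightarrow> real"
  assumes "0 \<le> \<rho>" "e \<ge> 0" and step: "\<And>k. k \<ge> K \<Longrightarrow> a (k + M) \<le> \<rho> * a k + (1 - \<rho>) * e"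
    and "k \<ge> K"
  shows "a (k + n * M) \<le> e + \<rho> ^ n * a k"
proof (induction n)
  case (Suc n)
  have "a (k + Suc n * M) = a ((k + n * M) + M)" by (simp add: algebra_simps)
  also have "\<dots> \<le> \<rho> * a (k + n * M) + (1 - \<rho>) * e" using step \<open>k \<ge> K\<close> by simp
  also have "\<dots> \<le> \<rho> * (e + \<rho> ^ n * a k) + (1 - \<rho>) * e"
    using Suc.IH \<open>0 \<le> \<rho>\<close> by (simp add: mult_left_mono)
  also have "\<dots> = e + \<rho> ^ Suc n * a k" by (simp add: algebra_simps)
  finally show ?case .
qed (simp add: \<open>e \<ge> 0\<close>)

lemma eventually_small_if_contraction:
  fixes a :: "nat \<Rightarrow> real"
  assumes nonneg: "\<And>k. a k \<ge> 0" and "0 \<le> \<rho>" "\<rho> < 1" "M > 0" "e > 0"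
    and step: "\<And>k. k \<ge> K \<Longrightarrow> a (k + M) \<le> \<rho> * a k + (1 - \<rho>) * e"
  shows "\<exists>k0. \<forall>k\<ge>k0. a k < 2 * e"
proof -
  define A where "A = (\<Sum>q<M. a (K + q))"
  have A: "a (K + q) \<le> A" if "q < M" for q
    unfolding A_def using that nonneg by (intro member_le_sum) auto
  have "A \<ge> 0" unfolding A_def using nonneg by (simp add: sum_nonneg)
  obtain n0 where "\<rho> ^ n0 < e / (A + 1)"
    using real_arch_pow_inv[of "e / (A + 1)" \<rho>] \<open>e > 0\<close> \<open>A \<ge> 0\<close> \<open>\<rho> < 1\<close> by auto
  then have "\<rho> ^ n0 * A \<le> e / (A + 1) * A" using \<open>A \<ge> 0\<close> by (intro mult_right_mono) auto
  also have "\<dots> < e" using \<open>e > 0\<close> \<open>A \<ge> 0\<close> by (simp add: field_simps)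
  finally have n0: "\<rho> ^ n0 * A < e" .
  have "a k < 2 * e" if "k \<ge> K + n0 * M" for k
  proof -
    define q n where "q = (k - K) mod M" and "n = (k - K) div M"
    have "k = K + q + n * M" using that by (simp add: q_def n_def)
    have "n0 * M div M \<le> n" unfolding n_def using that by (intro div_le_mono) simp
    then have "n \<ge> n0" using \<open>M > 0\<close> by simp
    have "q < M" using \<open>M > 0\<close> by (simp add: q_def)
    have "\<rho> ^ n \<le> \<rho> ^ n0" using \<open>n \<ge> n0\<close> \<open>0 \<le> \<rho>\<close> \<open>\<rho> < 1\<close> by (simp add: power_decreasing)
    then have "\<rho> ^ n * a (K + q) \<le> \<rho> ^ n0 * A"
      using A[OF \<open>q < M\<close>] nonneg[of "K + q"] \<open>0 \<le> \<rho>\<close> by (intro mult_mono) auto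
    moreover have "a (K + q + n * M) \<le> e + \<rho> ^ n * a (K + q)"
      using \<open>e > 0\<close> step by (intro iterated_contraction_bound[OF \<open>0 \<le> \<rho>\<close>]) auto
    ultimately show ?thesis using n0 \<open>k = K + q + n * M\<close> by simp
  qed
  then show ?thesis by blast
qed

lemma contraction_tendsto_zero:
  fixes a \<gamma> :: "nat \<Rightarrow> real"
  assumes nonneg: "\<And>k. a k \<ge> 0" and "0 \<le> \<rho>" "\<rho> < 1" "C \<ge> 0" "M > 0"
    and step: "\<And>k. a (k + M) \<le> \<rho> * a k + C * \<gamma> k"
    and "\<gamma> \<longlonglongrightarrow> 0"
  shows "a \<longlonglongrightarrow> 0"
proof (rule LIMSEQ_I)
  fix r :: real assume "r > 0"
  have "(\<lambda>k. C * \<gamma> k) \<longlonglongrightarrow> 0" using tendsto_mult_right_zero[OF \<open>\<gamma> \<longlonglongrightarrow> 0\<close>] .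
  moreover have "(1 - \<rho>) * (r / 3) > 0" using \<open>r > 0\<close> \<open>\<rho> < 1\<close> by simp
  ultimately have "\<forall>\<^sub>F k in sequentially. C * \<gamma> k < (1 - \<rho>) * (r / 3)" by (rule order_tendstoD(2))
  then obtain K where K: "\<And>k. k \<ge> K \<Longrightarrow> C * \<gamma> k < (1 - \<rho>) * (r / 3)"
    unfolding eventually_sequentially by blast
  have step': "a (k + M) \<le> \<rho> * a k + (1 - \<rho>) * (r / 3)" if "k \<ge> K" for k
    using step[of k] K[OF that] by linarith
  have "\<exists>k0. \<forall>k\<ge>k0. a k < 2 * (r / 3)"
    by (rule eventually_small_if_contraction[where K = K])
      (use nonneg \<open>0 \<le> \<rho>\<close> \<open>\<rho> < 1\<close> \<open>M > 0\<close> \<open>r > 0\<close> step' in auto)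
  then obtain k0 where k0: "\<forall>k\<ge>k0. a k < 2 * (r / 3)" ..
  show "\<exists>k0. \<forall>k\<ge>k0. norm (a k - 0) < r"
  proof (intro exI allI impI)
    fix k assume "k \<ge> k0"
    with k0 have "a k < 2 * (r / 3)" by blast
    then show "norm (a k - 0) < r" using nonneg[of k] \<open>r > 0\<close> by simp
  qed
qed

lemma contraction_weighted_summable:
  fixes a \<gamma> :: "nat \<Rightarrow> real"
  assumes nonneg: "\<And>k. a k \<ge> 0" and "0 \<le> \<rho>" "\<rho> < 1" "C \<ge> 0"
    and step: "\<And>k. a (k + M) \<le> \<rho> * a k + C * \<gamma> k"
    and \<gamma>_nonneg: "\<And>k. \<gamma> k \<ge> 0" and \<gamma>_decreasing: "\<And>k. \<gamma> (Suc k) \<le> \<gamma> k"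
    and "summable (\<lambda>k. (\<gamma> k)\<^sup>2)"
  shows "summable (\<lambda>k. \<gamma> k * a k)"
proof (rule summableI_nonneg_bounded)
  fix n
  define P where "P n = (\<Sum>k<n. \<gamma> k * a k)" for n
  have "decseq \<gamma>" using \<gamma>_decreasing by (simp add: decseq_Suc_iff)
  have "P n \<le> P (n + M)" unfolding P_def using nonneg \<gamma>_nonneg by (intro sum_mono2) auto
  moreover have "P (n + M) - P M = (\<Sum>k<n. \<gamma> (k + M) * a (k + M))"
    unfolding P_def by (induction n) (simp_all add: algebra_simps)
  also have "\<dots> \<le> (\<Sum>k<n. \<rho> * (\<gamma> k * a k) + C * (\<gamma> k)\<^sup>2)"
  proof (rule sum_mono)
    fix k
    have "\<gamma> (k + M) * a (k + M) \<le> \<gamma> k * a (k + M)"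
      using decseqD[OF \<open>decseq \<gamma>\<close>, of k "k + M"] nonneg by (simp add: mult_right_mono)
    also have "\<dots> \<le> \<gamma> k * (\<rho> * a k + C * \<gamma> k)" using step \<gamma>_nonneg by (simp add: mult_left_mono)
    finally show "\<gamma> (k + M) * a (k + M) \<le> \<rho> * (\<gamma> k * a k) + C * (\<gamma> k)\<^sup>2"
      by (simp add: algebra_simps power2_eq_square)
  qed
  also have "\<dots> = \<rho> * P n + C * (\<Sum>k<n. (\<gamma> k)\<^sup>2)"
    by (simp add: P_def sum.distrib sum_distrib_left)
  also have "\<dots> \<le> \<rho> * P n + C * (\<Sum>k. (\<gamma> k)\<^sup>2)"
    using sum_le_suminf[OF \<open>summable (\<lambda>k. (\<gamma> k)\<^sup>2)\<close>, of "{..<n}"] \<open>C \<ge> 0\<close>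
    by (simp add: mult_left_mono)
  ultimately have "(1 - \<rho>) * P n \<le> P M + C * (\<Sum>k. (\<gamma> k)\<^sup>2)" by (simp add: algebra_simps)
  with \<open>\<rho> < 1\<close> show "(\<Sum>k<n. \<gamma> k * a k) \<le> (P M + C * (\<Sum>k. (\<gamma> k)\<^sup>2)) / (1 - \<rho>)"
    by (simp add: P_def field_simps)
qed (use nonneg \<gamma>_nonneg in simp)

lemma convergent_if_le_plus_summable:
  fixes u \<beta> :: "nat \<Rightarrow> real"
  assumes "\<And>t. u t \<ge> 0" "\<And>t. u (Suc t) \<le> u t + \<beta> t" "summable \<beta>" "\<And>t. \<beta> t \<ge> 0"
  shows "convergent u"
proof -
  define v where "v t = u t - (\<Sum>s<t. \<beta> s)" for t
  have "v (Suc t) \<le> v t" for t using assms(2)[of t] by (simp add: v_def)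
  then have "decseq v" by (simp add: decseq_Suc_iff)
  moreover have "- suminf \<beta> \<le> v t" for t
    using sum_le_suminf[OF \<open>summable \<beta>\<close>, of "{..<t}"] assms(1)[of t] assms(4) by (simp add: v_def)
  ultimately obtain c where "v \<longlonglongrightarrow> c" using decseq_convergent by blast
  then have "(\<lambda>t. v t + (\<Sum>s<t. \<beta> s)) \<longlonglongrightarrow> c + suminf \<beta>"
    by (intro tendsto_add summable_LIMSEQ \<open>summable \<beta>\<close>)
  then show ?thesis unfolding v_def convergent_def by auto
qed

lemma subseq_tendsto_zero_if_weighted_summable:
  fixes \<gamma> h :: "nat \<Rightarrow> real"
  assumes \<gamma>_pos: "\<And>t. \<gamma> t > 0" and "\<not> summable \<gamma>"
    and h_nonneg: "\<And>t. h t \<ge> 0" and "summable (\<lambda>t. \<gamma> t * h t)"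
  obtains \<tau> where "filterlim \<tau> at_top sequentially" "(\<lambda>n. h (\<tau> n)) \<longlonglongrightarrow> 0"
proof -
  have "\<exists>t\<ge>n. h t < 1 / Suc n" for n
  proof (rule ccontr)
    assume never_small: "\<not> (\<exists>t\<ge>n. h t < 1 / Suc n)"
    have "norm (\<gamma> t) \<le> Suc n * (\<gamma> t * h t)" if "t \<ge> n" for t
    proof -
      have "1 / Suc n \<le> h t" using never_small that by (simp add: not_less)
      then have "1 \<le> Suc n * h t" by (simp add: field_simps)
      then have "\<gamma> t * 1 \<le> \<gamma> t * (Suc n * h t)" using \<gamma>_pos[of t] by (intro mult_left_mono) auto
      then show ?thesis using \<gamma>_pos[of t] by (simp add: algebra_simps)
    qed
    moreover have "summable (\<lambda>t. Suc n * (\<gamma> t * h t))"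
      using \<open>summable (\<lambda>t. \<gamma> t * h t)\<close> by (rule summable_mult)
    ultimately have "summable \<gamma>" using summable_comparison_test' by blast
    with \<open>\<not> summable \<gamma>\<close> show False ..
  qed
  then obtain \<tau> where \<tau>: "\<And>n. \<tau> n \<ge> n" "\<And>n. h (\<tau> n) < 1 / Suc n" by metis
  have "filterlim \<tau> at_top sequentially"
    by (rule filterlim_at_top_mono[OF filterlim_ident]) (use \<tau>(1) in \<open>auto intro: always_eventually\<close>)
  moreover have "(\<lambda>n. h (\<tau> n)) \<longlonglongrightarrow> 0"
  proof (rule tendsto_sandwich[OF _ _ tendsto_const LIMSEQ_inverse_real_of_nat])
    show "\<forall>\<^sub>F n in sequentially. 0 \<le> h (\<tau> n)" using h_nonneg by simp
    show "\<forall>\<^sub>F n in sequentially. h (\<tau> n) \<le> inverse (real (Suc n))"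
      using \<tau>(2) by (simp add: inverse_eq_divide less_imp_le)
  qed
  ultimately show ?thesis using that by blast
qed

section \<open>Quasi-Fejer sequences\<close>

definition wdist :: "('c::finite \<Rightarrow> real) \<Rightarrow> real^'c \<Rightarrow> real^'c \<Rightarrow> real" where
  "wdist \<omega> x y = (\<Sum>c\<in>UNIV. \<omega> c * (x $ c - y $ c)\<^sup>2)"

lemma wdist_nonneg: "(\<And>c. \<omega> c \<ge> 0) \<Longrightarrow> wdist \<omega> x y \<ge> 0"
  unfolding wdist_def by (simp add: sum_nonneg)

lemma wdist_self [simp]: "wdist \<omega> x x = 0"
  by (simp add: wdist_def)

lemma norm_le_wdist:
  assumes "\<And>c. w \<le> \<omega> c"
  shows "w * (norm (x - y))\<^sup>2 \<le> wdist \<omega> x y"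
proof -
  have "(norm (x - y))\<^sup>2 = (\<Sum>c\<in>UNIV. (x $ c - y $ c)\<^sup>2)"
    unfolding power2_norm_eq_inner by (simp add: inner_vec_def power2_eq_square)
  then show ?thesis
    unfolding wdist_def using assms by (simp add: sum_distrib_left sum_mono mult_right_mono)
qed

lemma tendsto_if_wdist_tendsto_zero:
  fixes X :: "nat \<Rightarrow> real^'c::finite"
  assumes \<omega>_pos: "\<And>c. \<omega> c > 0" and "(\<lambda>t. wdist \<omega> (X t) x) \<longlonglongrightarrow> 0"
  shows "X \<longlonglongrightarrow> x"
proof -
  define w where "w = Min (range \<omega>)"
  have "w > 0" unfolding w_def using \<omega>_pos by (simp add: Min_gr_iff)
  have "(\<lambda>t. (norm (X t - x))\<^sup>2) \<longlonglongrightarrow> 0"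
  proof (rule tendsto_sandwich[OF _ _ tendsto_const])
    show "\<forall>\<^sub>F t in sequentially. (norm (X t - x))\<^sup>2 \<le> wdist \<omega> (X t) x / w"
      using norm_le_wdist[of w \<omega>] \<open>w > 0\<close> by (simp add: w_def field_simps)
    show "(\<lambda>t. wdist \<omega> (X t) x / w) \<longlonglongrightarrow> 0"
      using tendsto_divide_zero[OF assms(2)] .
  qed simp
  then have "(\<lambda>t. sqrt ((norm (X t - x))\<^sup>2)) \<longlonglongrightarrow> sqrt 0" by (rule tendsto_real_sqrt)
  then show ?thesis by (simp add: LIM_zero_iff tendsto_norm_zero_iff)
qed

lemma telescope_le_plus_suminf:
  fixes u a \<beta> :: "nat \<Rightarrow> real"
  assumes "\<And>t. u (Suc t) \<le> u t - a t + \<beta> t" "summable \<beta>" "\<And>t. \<beta> t \<ge> 0"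
  shows "u n + (\<Sum>t<n. a t) \<le> u 0 + suminf \<beta>"
proof -
  have "u n + (\<Sum>t<n. a t) \<le> u 0 + (\<Sum>t<n. \<beta> t)"
  proof (induction n)
    case (Suc n)
    then show ?case using assms(1)[of n] by simp
  qed simp
  also have "(\<Sum>t<n. \<beta> t) \<le> suminf \<beta>" using assms(2,3) by (simp add: sum_le_suminf)
  finally show ?thesis by simp
qed

lemma quasi_fejer_bounded_summable:
  fixes X :: "nat \<Rightarrow> real^'c::finite" and F :: "real^'c \<Rightarrow> real"
  assumes \<omega>_pos: "\<And>c. \<omega> c > 0" and x0: "\<forall>y. F x0 \<le> F y"
    and descent: "\<And>t. wdist \<omega> (X (Suc t)) x0 \<le> wdist \<omega> (X t) x0 - 2 * \<gamma> t * (F (X t) - F x0) + \<beta> t"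
    and "summable \<beta>" and \<beta>_nonneg: "\<And>t. \<beta> t \<ge> 0" and \<gamma>_pos: "\<And>t. \<gamma> t > 0"
  shows "summable (\<lambda>t. \<gamma> t * (F (X t) - F x0))" and "bounded (range X)"
proof -
  define D where "D = wdist \<omega> (X 0) x0 + suminf \<beta>"
  have partial: "wdist \<omega> (X n) x0 + (\<Sum>t<n. 2 * \<gamma> t * (F (X t) - F x0)) \<le> D" for n
    unfolding D_def using descent \<open>summable \<beta>\<close> \<beta>_nonneg by (rule telescope_le_plus_suminf)
  have wdist_nonneg': "wdist \<omega> x y \<ge> 0" for x y using \<omega>_pos by (simp add: wdist_nonneg less_imp_le)
  show "summable (\<lambda>t. \<gamma> t * (F (X t) - F x0))"
  proof (rule summableI_nonneg_bounded)
    show "0 \<le> \<gamma> t * (F (X t) - F x0)" for t using \<gamma>_pos[of t] x0 by simp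
    show "(\<Sum>t<n. \<gamma> t * (F (X t) - F x0)) \<le> D / 2" for n
      using partial[of n] wdist_nonneg'[of "X n" x0] by (simp add: sum_distrib_left[symmetric] mult.assoc)
  qed
  define w where "w = Min (range \<omega>)"
  have "w > 0" unfolding w_def using \<omega>_pos by (simp add: Min_gr_iff)
  have "norm (X t - x0) \<le> sqrt (D / w)" for t
  proof -
    have "0 \<le> (\<Sum>s<t. 2 * \<gamma> s * (F (X s) - F x0))"
      using \<gamma>_pos x0 by (intro sum_nonneg) (simp add: less_imp_le)
    moreover have "w * (norm (X t - x0))\<^sup>2 \<le> wdist \<omega> (X t) x0"
      by (rule norm_le_wdist) (simp add: w_def)
    ultimately have "w * (norm (X t - x0))\<^sup>2 \<le> D" using partial[of t] by linarith
    then show ?thesis using \<open>w > 0\<close> by (simp add: real_le_rsqrt field_simps)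
  qed
  then have "range X \<subseteq> cball x0 (sqrt (D / w))" by (auto simp: dist_norm norm_minus_commute)
  then show "bounded (range X)" using bounded_cball bounded_subset by blast
qed

lemma quasi_fejer_tendsto_cluster_point:
  fixes X :: "nat \<Rightarrow> real^'c::finite" and F :: "real^'c \<Rightarrow> real"
  assumes \<omega>_pos: "\<And>c. \<omega> c > 0" and l: "\<forall>y. F l \<le> F y"
    and descent: "\<And>t. wdist \<omega> (X (Suc t)) l \<le> wdist \<omega> (X t) l - 2 * \<gamma> t * (F (X t) - F l) + \<beta> t"
    and "summable \<beta>" "\<And>t. \<beta> t \<ge> 0" "\<And>t. \<gamma> t > 0"
    and \<sigma>: "filterlim \<sigma> at_top sequentially" and "(\<lambda>n. X (\<sigma> n)) \<longlonglongrightarrow> l"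
  shows "X \<longlonglongrightarrow> l"
proof -
  have "convergent (\<lambda>t. wdist \<omega> (X t) l)"
  proof (rule convergent_if_le_plus_summable)
    show "wdist \<omega> (X (Suc t)) l \<le> wdist \<omega> (X t) l + \<beta> t" for t
    proof -
      have "0 \<le> 2 * \<gamma> t * (F (X t) - F l)" using l \<open>\<gamma> t > 0\<close> by simp
      then show ?thesis using descent[of t] by linarith
    qed
  qed (use \<omega>_pos assms(4,5) in \<open>auto simp: wdist_nonneg less_imp_le\<close>)
  then obtain c where c: "(\<lambda>t. wdist \<omega> (X t) l) \<longlonglongrightarrow> c" by (auto simp: convergent_def)
  have "(\<lambda>n. wdist \<omega> (X (\<sigma> n)) l) \<longlonglongrightarrow> wdist \<omega> l l"
    unfolding wdist_def
    by (intro tendsto_sum tendsto_mult tendsto_const tendsto_power tendsto_diff tendsto_vec_nth assms(8))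
  moreover have "(\<lambda>n. wdist \<omega> (X (\<sigma> n)) l) \<longlonglongrightarrow> c" using filterlim_compose[OF c \<sigma>] by simp
  ultimately have "c = 0" using LIMSEQ_unique by force
  with c show ?thesis using tendsto_if_wdist_tendsto_zero[where X = X and x = l, OF \<omega>_pos] by simp
qed

lemma quasi_fejer_converges_to_minimizer:
  fixes X :: "nat \<Rightarrow> real^'c::finite" and F :: "real^'c \<Rightarrow> real"
  assumes \<omega>_pos: "\<And>c. \<omega> c > 0" and "continuous_on UNIV F" and "\<exists>x. \<forall>y. F x \<le> F y"
    and descent: "\<And>t x. \<forall>y. F x \<le> F y \<Longrightarrow>
      wdist \<omega> (X (Suc t)) x \<le> wdist \<omega> (X t) x - 2 * \<gamma> t * (F (X t) - F x) + \<beta> t"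
    and "summable \<beta>" "\<And>t. \<beta> t \<ge> 0" and \<gamma>_pos: "\<And>t. \<gamma> t > 0" and "\<not> summable \<gamma>"
  shows "\<exists>x. (\<forall>y. F x \<le> F y) \<and> X \<longlonglongrightarrow> x"
proof -
  obtain x0 where x0: "\<forall>y. F x0 \<le> F y" using assms(3) by blast
  note bounded_summable = quasi_fejer_bounded_summable[OF \<omega>_pos x0 descent[OF x0] assms(5,6) \<gamma>_pos]
  obtain \<tau> where \<tau>: "filterlim \<tau> at_top sequentially" "(\<lambda>n. F (X (\<tau> n)) - F x0) \<longlonglongrightarrow> 0"
    using subseq_tendsto_zero_if_weighted_summable[OF \<gamma>_pos \<open>\<not> summable \<gamma>\<close> _ bounded_summable(1)] x0
    by auto
  have "bounded (range (X \<circ> \<tau>))" using bounded_summable(2) by (rule bounded_subset) auto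
  then obtain l r where "strict_mono r" and lim: "(X \<circ> \<tau> \<circ> r) \<longlonglongrightarrow> l"
    using bounded_imp_convergent_subsequence by blast
  define \<sigma> where "\<sigma> = \<tau> \<circ> r"
  have \<sigma>: "filterlim \<sigma> at_top sequentially"
    unfolding \<sigma>_def using filterlim_compose[OF \<tau>(1) filterlim_subseq[OF \<open>strict_mono r\<close>]] by (simp add: comp_def)
  have F_lim: "(\<lambda>n. F (X (\<sigma> n))) \<longlonglongrightarrow> F l"
    using continuous_on_tendsto_compose[OF assms(2) lim] by (simp add: \<sigma>_def comp_def)
  have "(\<lambda>n. F (X (\<sigma> n)) - F x0) \<longlonglongrightarrow> 0"
    using LIMSEQ_subseq_LIMSEQ[OF \<tau>(2) \<open>strict_mono r\<close>] by (simp add: \<sigma>_def comp_def)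
  moreover have "(\<lambda>n. F (X (\<sigma> n)) - F x0) \<longlonglongrightarrow> F l - F x0"
    using F_lim by (intro tendsto_diff) simp_all
  ultimately have "F l = F x0" using LIMSEQ_unique by force
  then have l: "\<forall>y. F l \<le> F y" using x0 by simp
  have "X \<longlonglongrightarrow> l"
    using quasi_fejer_tendsto_cluster_point[OF \<omega>_pos l descent[OF l] assms(5,6) \<gamma>_pos \<sigma>] lim
    by (simp add: \<sigma>_def comp_def)
  with l show ?thesis by blast
qed

section \<open>The push-sum subgradient method\<close>

lemma exists_ge_1_if_sum_eq_card:
  fixes x :: "'a \<Rightarrow> real"
  assumes "finite S" "S \<noteq> {}" "(\<Sum>i\<in>S. x i) = card S"
  shows "\<exists>j\<in>S. x j \<ge> 1"
proof (rule ccontr)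
  assume "\<not> ?thesis"
  then have "(\<Sum>i\<in>S. x i) < (\<Sum>i\<in>S. 1)" using assms(1,2) by (intro sum_strict_mono) auto
  with assms(3) show False by simp
qed

locale push_sum_subgradient =
  fixes f :: "'a::finite \<Rightarrow> real^'c::finite \<Rightarrow> real"
    and blk :: "'c \<Rightarrow> 'p::finite"
    and N :: "'a \<Rightarrow> 'p set"
    and V :: "'p \<Rightarrow> 'a set"
    and E :: "nat \<Rightarrow> 'p \<Rightarrow> ('a \<times> 'a) set"
    and W :: "nat \<Rightarrow> 'p \<Rightarrow> 'a \<Rightarrow> 'a \<Rightarrow> real"
    and \<nu> L :: real and Q :: nat
    and \<gamma> :: "nat \<Rightarrow> real"
    and q :: "nat \<Rightarrow> 'a \<Rightarrow> 'p \<Rightarrow> real"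
    and w y z :: "nat \<Rightarrow> 'a \<Rightarrow> 'p \<Rightarrow> real^'c"
    and ytil G :: "nat \<Rightarrow> 'a \<Rightarrow> real^'c"
  assumes solvable: "\<exists>ys. \<forall>y'. (\<Sum>i\<in>UNIV. f i ys) \<le> (\<Sum>i\<in>UNIV. f i y')"
    and depends: "\<And>i u v. (\<forall>c. blk c \<in> N i \<longrightarrow> u $ c = v $ c) \<Longrightarrow> f i u = f i v"
    and V_sup: "\<And>p. {i. p \<in> N i} \<subseteq> V p"
    and E_sub: "\<And>k p. E k p \<subseteq> V p \<times> V p"
    and W_edge: "\<And>k p i j. i \<in> V p \<Longrightarrow> j \<in> V p \<Longrightarrow> (j, i) \<in> E k p \<Longrightarrow> W k p i j > 0"
    and W_noedge: "\<And>k p i j. i \<in> V p \<Longrightarrow> j \<in> V p \<Longrightarrow> (j, i) \<notin> E k p \<Longrightarrow> W k p i j = 0"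
    and selfloop: "\<And>k p i. i \<in> V p \<Longrightarrow> (i, i) \<in> E k p"
    and col_stoch: "\<And>k p j. j \<in> V p \<Longrightarrow> (\<Sum>i\<in>V p. W k p i j) = 1"
    and nu_pos: "\<nu> > 0"
    and W_lb: "\<And>k p i j. (j, i) \<in> E k p \<Longrightarrow> W k p i j \<ge> \<nu>"
    and Q_pos: "Q > 0"
    and strongly_conn: "\<And>p k i j. i \<in> V p \<Longrightarrow> j \<in> V p \<Longrightarrow>
          (i, j) \<in> (\<Union>t\<in>{k*Q..<(Suc k)*Q}. E t p)\<^sup>*"
    and convex: "\<And>i. convex_on UNIV (f i)"
    and L_pos: "L > 0"
    and subgrad_bound: "\<And>i u g. subgradient (f i) u g \<Longrightarrow> norm g \<le> L"
    and gamma_pos: "\<And>k. \<gamma> k > 0"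
    and gamma_noninc: "\<And>k. \<gamma> (Suc k) \<le> \<gamma> k"
    and gamma_nonsum: "\<not> summable \<gamma>"
    and gamma_sq_sum: "summable (\<lambda>k. (\<gamma> k)\<^sup>2)"
    and q_init: "\<And>p i. i \<in> V p \<Longrightarrow> q 0 i p = 1"
    and q_step: "\<And>k p i. i \<in> V p \<Longrightarrow> q (Suc k) i p = (\<Sum>j\<in>V p. W k p i j * q k j p)"
    and w_step: "\<And>k p i. i \<in> V p \<Longrightarrow> w (Suc k) i p = (\<Sum>j\<in>V p. W k p i j *\<^sub>R z k j p)"
    and y_step: "\<And>k p i. i \<in> V p \<Longrightarrow> y (Suc k) i p = (1 / q (Suc k) i p) *\<^sub>R w (Suc k) i p"
    and ytil_def: "\<And>k i c. i \<in> V (blk c) \<Longrightarrow> ytil k i $ c = y k i (blk c) $ c"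
    and G_subgrad: "\<And>k i. subgradient (f i) (ytil (Suc k) i) (G (Suc k) i)"
    and z_step: "\<And>k p i. i \<in> V p \<Longrightarrow>
          z (Suc k) i p = w (Suc k) i p - \<gamma> k *\<^sub>R blockproj blk p (G (Suc k) i)"
begin

lemma W_nonneg: "i \<in> V p \<Longrightarrow> j \<in> V p \<Longrightarrow> W k p i j \<ge> 0"
  using W_edge[of i p j k] W_noedge[of i p j k] by (cases "(j, i) \<in> E k p") auto

lemma W_le_1:
  assumes "i \<in> V p" "j \<in> V p"
  shows "W k p i j \<le> 1"
proof -
  have "W k p i j \<le> (\<Sum>i'\<in>V p. W k p i' j)"
    using assms by (intro member_le_sum) (auto simp: W_nonneg)
  then show ?thesis using col_stoch[OF assms(2)] by simp
qed

lemma nu_le_1: "i \<in> V p \<Longrightarrow> \<nu> \<le> 1"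
  using W_lb[OF selfloop, of i p 0] W_le_1[of i p i 0] by simp

lemma q_sum_eq_card: "(\<Sum>i\<in>V p. q k i p) = card (V p)"
proof (induction k)
  case (Suc k)
  have "(\<Sum>i\<in>V p. q (Suc k) i p) = (\<Sum>i\<in>V p. \<Sum>j\<in>V p. W k p i j * q k j p)"
    using q_step by simp
  also have "\<dots> = (\<Sum>j\<in>V p. (\<Sum>i\<in>V p. W k p i j) * q k j p)"
    by (subst sum.swap) (simp add: sum_distrib_right)
  also have "\<dots> = (\<Sum>j\<in>V p. q k j p)" using col_stoch by simp
  finally show ?case using Suc by simp
qed (simp add: q_init)

lemma q_pos: "i \<in> V p \<Longrightarrow> q k i p > 0"
proof (induction k arbitrary: i)
  case (Suc k)
  have "W k p i i * q k i p \<le> (\<Sum>j\<in>V p. W k p i j * q k j p)"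
    using Suc by (intro member_le_sum mult_nonneg_nonneg W_nonneg less_imp_le) auto
  moreover have "W k p i i * q k i p > 0"
    using W_edge[OF Suc.prems Suc.prems selfloop[OF Suc.prems]] Suc.IH[OF Suc.prems] by simp
  ultimately show ?case using q_step[OF Suc.prems] by simp
qed (simp add: q_init)

lemma q_le_card: "i \<in> V p \<Longrightarrow> q k i p \<le> card (V p)"
  using member_le_sum[of i "V p" "\<lambda>i. q k i p"] q_pos q_sum_eq_card by (simp add: less_imp_le)

lemma jointly_strongly_connected_E: "jointly_strongly_connected (V p) (\<lambda>t. E (t + s) p) (2 * Q)"
  by (intro jointly_strongly_connected_shift
      jointly_strongly_connected_if_periodic[where E = "\<lambda>t. E t p", OF Q_pos strongly_conn])

definition mix_len :: "'p \<Rightarrow> nat" where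
  "mix_len p = card (V p) * (2 * Q)"

definition q_min :: "'p \<Rightarrow> real" where
  "q_min p = \<nu> ^ mix_len p"

lemma q_min_pos: "q_min p > 0"
  using nu_pos by (simp add: q_min_def)

lemma q_reach_lower_bound:
  assumes "j \<in> V p" "i \<in> reach (V p) (\<lambda>s. E (s + T) p) j d"
  shows "q (d + T) i p \<ge> \<nu> ^ d * q T j p"
proof -
  have "\<nu> ^ d * q (0 + T) j p \<le> q (d + T) i p"
    by (rule reach_lower_bound[where V = "V p" and E = "\<lambda>s. E (s + T) p" and A = "\<lambda>s. W (s + T) p"
          and x = "\<lambda>s l. q (s + T) l p"])
      (use assms W_nonneg W_lb selfloop nu_pos q_step q_pos in \<open>auto intro: less_imp_le\<close>)
  then show ?thesis by simp
qed

lemma q_ge_q_min: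
  assumes "i \<in> V p"
  shows "q t i p \<ge> q_min p"
proof (cases "mix_len p \<le> t")
  case True
  define T where "T = t - mix_len p"
  obtain j where "j \<in> V p" "q T j p \<ge> 1"
    using exists_ge_1_if_sum_eq_card[of "V p" "\<lambda>j. q T j p"] q_sum_eq_card assms by auto
  have "reach (V p) (\<lambda>s. E (s + T) p) j (mix_len p) = V p"
    unfolding mix_len_def using \<open>j \<in> V p\<close> E_sub jointly_strongly_connected_E by (intro reach_eq) auto
  then have "q (mix_len p + T) i p \<ge> \<nu> ^ mix_len p * q T j p"
    using q_reach_lower_bound[OF \<open>j \<in> V p\<close>] assms by blast
  moreover have "\<nu> ^ mix_len p * q T j p \<ge> \<nu> ^ mix_len p"
    using \<open>q T j p \<ge> 1\<close> nu_pos by (simp add: mult_le_cancel_left1)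
  moreover have "mix_len p + T = t" using True by (simp add: T_def)
  ultimately show ?thesis unfolding q_min_def by simp
next
  case False
  have "q (t + 0) i p \<ge> \<nu> ^ t * q 0 i p" using q_reach_lower_bound[OF assms start_in_reach] .
  moreover have "\<nu> ^ mix_len p \<le> \<nu> ^ t"
    using False nu_pos nu_le_1[OF assms] by (intro power_decreasing) auto
  ultimately show ?thesis using q_init[OF assms] unfolding q_min_def by simp
qed

text \<open>The estimates are indexed so that time t refers to the iterate y(t+1): the initial
  y(0) is not related to the rest of the iteration.\<close>
definition est :: "'c \<Rightarrow> nat \<Rightarrow> 'a \<Rightarrow> real" where
  "est c t i = y (Suc t) i (blk c) $ c"

text \<open>The normalised estimates follow a row-stochastic averaging scheme, perturbed by the
  subgradient steps.\<close>
definition mix :: "'p \<Rightarrow> nat \<Rightarrow> 'a \<Rightarrow> 'a \<Rightarrow> real" where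
  "mix p t i l = W (Suc t) p i l * q (Suc t) l p / q (Suc (Suc t)) i p"

definition pert :: "'c \<Rightarrow> nat \<Rightarrow> 'a \<Rightarrow> real" where
  "pert c t i = - (\<gamma> t / q (Suc (Suc t)) i (blk c)) *
     (\<Sum>l\<in>V (blk c). W (Suc t) (blk c) i l * G (Suc t) l $ c)"

lemma w_eq_q_scaleR_y: "i \<in> V p \<Longrightarrow> w (Suc t) i p = q (Suc t) i p *\<^sub>R y (Suc t) i p"
  using y_step[of i p t] q_pos[of i p "Suc t"] by simp

lemma est_step:
  assumes "i \<in> V (blk c)"
  shows "est c (Suc t) i = (\<Sum>l\<in>V (blk c). mix (blk c) t i l * est c t l) + pert c t i"
proof -
  define p where "p = blk c"
  define q2 where "q2 = q (Suc (Suc t)) i p"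
  have z_c: "z (Suc t) l p $ c = q (Suc t) l p * est c t l - \<gamma> t * G (Suc t) l $ c" if "l \<in> V p" for l
    using z_step[OF that, of t] w_eq_q_scaleR_y[OF that, of t] by (simp add: est_def blockproj_def p_def)
  have "est c (Suc t) i = (1 / q2) * (w (Suc (Suc t)) i p $ c)"
    using y_step[of i p "Suc t"] assms by (simp add: est_def q2_def p_def)
  also have "w (Suc (Suc t)) i p $ c = (\<Sum>l\<in>V p. W (Suc t) p i l * z (Suc t) l p $ c)"
    using w_step[of i p "Suc t"] assms by (simp add: p_def)
  also have "\<dots> = (\<Sum>l\<in>V p. W (Suc t) p i l * (q (Suc t) l p * est c t l - \<gamma> t * G (Suc t) l $ c))"
    by (simp add: z_c)
  also have "(1 / q2) * \<dots> = (\<Sum>l\<in>V p. (W (Suc t) p i l * q (Suc t) l p / q2) * est c t l)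
      - (\<gamma> t / q2) * (\<Sum>l\<in>V p. W (Suc t) p i l * G (Suc t) l $ c)"
    by (simp add: sum_distrib_left sum_subtractf[symmetric] algebra_simps)
  finally show ?thesis by (simp add: mix_def pert_def q2_def p_def)
qed

lemma mix_nonneg: "i \<in> V p \<Longrightarrow> l \<in> V p \<Longrightarrow> mix p t i l \<ge> 0"
  unfolding mix_def by (intro divide_nonneg_nonneg mult_nonneg_nonneg W_nonneg less_imp_le[OF q_pos])

lemma mix_stochastic: "i \<in> V p \<Longrightarrow> (\<Sum>l\<in>V p. mix p t i l) = 1"
  using q_step[of i p "Suc t"] q_pos[of i p "Suc (Suc t)"] by (simp add: mix_def sum_divide_distrib[symmetric])

definition mix_floor :: "'p \<Rightarrow> real" where
  "mix_floor p = \<nu> * q_min p / card (V p)"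

lemma mix_edge_ge:
  assumes "i \<in> V p" "l \<in> V p" "(l, i) \<in> E (Suc t) p"
  shows "mix p t i l \<ge> mix_floor p"
proof -
  have "\<nu> * q_min p \<le> W (Suc t) p i l * q (Suc t) l p"
    using W_lb[OF assms(3)] q_ge_q_min[OF assms(2)] nu_pos q_min_pos[of p]
    by (intro mult_mono) (auto simp: less_imp_le)
  then have "\<nu> * q_min p / card (V p) \<le> W (Suc t) p i l * q (Suc t) l p / card (V p)"
    by (simp add: divide_right_mono)
  also have "\<dots> \<le> mix p t i l"
  proof -
    have "card (V p) > 0" using assms(1) by (auto simp: card_gt_0_iff)
    then show ?thesis
      unfolding mix_def using q_le_card[OF assms(1)] q_pos[OF assms(1)] W_nonneg[OF assms(1,2)] q_pos[OF assms(2)]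
      by (intro divide_left_mono mult_nonneg_nonneg mult_pos_pos) (auto simp: less_imp_le)
  qed
  finally show ?thesis unfolding mix_floor_def .
qed

lemma G_component_le: "\<bar>G (Suc t) j $ c\<bar> \<le> L"
  using component_le_norm_cart[of "G (Suc t) j" c] subgrad_bound[OF G_subgrad[where k = t and i = j]] by linarith

definition pert_gain :: "'p \<Rightarrow> real" where
  "pert_gain p = card (V p) * L / q_min p"

lemma pert_bound:
  assumes "i \<in> V (blk c)"
  shows "\<bar>pert c t i\<bar> \<le> pert_gain (blk c) * \<gamma> t"
proof -
  define p where "p = blk c"
  have "\<bar>\<Sum>l\<in>V p. W (Suc t) p i l * G (Suc t) l $ c\<bar> \<le> (\<Sum>l\<in>V p. \<bar>W (Suc t) p i l * G (Suc t) l $ c\<bar>)"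
    by (rule sum_abs)
  also have "\<dots> \<le> (\<Sum>l\<in>V p. L)"
  proof (rule sum_mono)
    fix l assume "l \<in> V p"
    then have "\<bar>W (Suc t) p i l\<bar> * \<bar>G (Suc t) l $ c\<bar> \<le> 1 * L"
      using assms W_nonneg W_le_1 G_component_le by (intro mult_mono) (auto simp: p_def)
    then show "\<bar>W (Suc t) p i l * G (Suc t) l $ c\<bar> \<le> L" by (simp add: abs_mult)
  qed
  finally have sum_bound: "\<bar>\<Sum>l\<in>V p. W (Suc t) p i l * G (Suc t) l $ c\<bar> \<le> card (V p) * L" by simp
  have "q_min p \<le> q (Suc (Suc t)) i p" using q_ge_q_min assms by (simp add: p_def)
  then have step_bound: "\<gamma> t / q (Suc (Suc t)) i p \<le> \<gamma> t / q_min p"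
    using gamma_pos[of t] q_min_pos[of p] by (intro divide_left_mono) auto
  have "\<bar>pert c t i\<bar> = (\<gamma> t / q (Suc (Suc t)) i p) * \<bar>\<Sum>l\<in>V p. W (Suc t) p i l * G (Suc t) l $ c\<bar>"
    using gamma_pos[of t] q_pos[of i p "Suc (Suc t)"] assms by (simp add: pert_def p_def abs_mult)
  also have "\<dots> \<le> (\<gamma> t / q_min p) * (card (V p) * L)"
    using sum_bound step_bound gamma_pos[of t] q_min_pos[of p] by (intro mult_mono) auto
  also have "\<dots> = pert_gain (blk c) * \<gamma> t" by (simp add: pert_gain_def p_def)
  finally show ?thesis .
qed

definition spr :: "'c \<Rightarrow> nat \<Rightarrow> real" where
  "spr c t = spread (est c t) (V (blk c))"

lemma spr_nonneg: "spr c t \<ge> 0"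
  by (simp add: spr_def spread_nonneg)

lemma spr_contraction:
  fixes c :: 'c
  defines "p \<equiv> blk c"
  shows "spr c (t + mix_len p) \<le> (1 - mix_floor p ^ mix_len p) * spr c t + 2 * mix_len p * pert_gain p * \<gamma> t"
proof -
  have "mix_floor p \<ge> 0" using nu_pos q_min_pos[of p] by (simp add: mix_floor_def)
  have "spread (est c (t + mix_len p)) (V p)
      \<le> (1 - mix_floor p ^ mix_len p) * spread (est c (t + 0)) (V p)
        + 2 * (\<Sum>u<mix_len p. pert_gain p * \<gamma> (t + u))"
    unfolding mix_len_def
  proof (rule spread_contraction[where x = "\<lambda>s. est c (t + s)" and A = "\<lambda>s. mix p (t + s)"
        and E = "\<lambda>s. E (s + Suc t) p" and e = "\<lambda>s. pert c (t + s)"])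
    show "mix_floor p \<le> mix p (t + s) i l" if "i \<in> V p" "l \<in> V p" "(l, i) \<in> E (s + Suc t) p" for s i l
      using mix_edge_ge that by (simp add: add.commute)
    show "est c (t + Suc s) i = (\<Sum>l\<in>V p. mix p (t + s) i l * est c (t + s) l) + pert c (t + s) i"
      if "i \<in> V p" for s i
      using est_step that by (simp add: p_def)
    show "\<bar>pert c (t + s) i\<bar> \<le> pert_gain p * \<gamma> (t + s)" if "i \<in> V p" for s i
      using pert_bound that by (simp add: p_def)
    show "jointly_strongly_connected (V p) (\<lambda>s. E (s + Suc t) p) (2 * Q)"
      by (rule jointly_strongly_connected_E)
  qed (use mix_nonneg mix_stochastic \<open>mix_floor p \<ge> 0\<close> selfloop E_sub in auto)
  also have "(\<Sum>u<mix_len p. pert_gain p * \<gamma> (t + u)) \<le> (\<Sum>u<mix_len p. pert_gain p * \<gamma> t)"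
  proof (rule sum_mono)
    have "decseq \<gamma>" using gamma_noninc by (simp add: decseq_Suc_iff)
    moreover have "pert_gain p \<ge> 0" using L_pos q_min_pos[of p] by (simp add: pert_gain_def)
    ultimately show "pert_gain p * \<gamma> (t + u) \<le> pert_gain p * \<gamma> t" for u
      by (simp add: decseqD mult_left_mono)
  qed
  finally show ?thesis by (simp add: spr_def p_def)
qed

lemma gamma_tendsto_zero: "\<gamma> \<longlonglongrightarrow> 0"
proof -
  have "(\<lambda>k. sqrt ((\<gamma> k)\<^sup>2)) \<longlonglongrightarrow> sqrt 0"
    using summable_LIMSEQ_zero[OF gamma_sq_sum] by (rule tendsto_real_sqrt)
  then show ?thesis using gamma_pos by (simp add: less_imp_le)
qed

lemma spr_tendsto_zero_and_summable: "spr c \<longlonglongrightarrow> 0 \<and> summable (\<lambda>t. \<gamma> t * spr c t)"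
proof (cases "V (blk c) = {}")
  case True
  then have "spr c = (\<lambda>t. 0)" by (simp add: fun_eq_iff spr_def spread_def)
  then show ?thesis by simp
next
  case False
  define p where "p = blk c"
  have "card (V p) > 0" using False by (simp add: card_gt_0_iff p_def)
  then have "mix_len p > 0" using Q_pos by (simp add: mix_len_def)
  obtain i where "i \<in> V p" using False by (auto simp: p_def)
  have "q_min p \<le> 1"
    using nu_pos nu_le_1[OF \<open>i \<in> V p\<close>] by (simp add: q_min_def power_le_one)
  then have "\<nu> * q_min p \<le> 1 * 1"
    using nu_pos nu_le_1[OF \<open>i \<in> V p\<close>] q_min_pos[of p] by (intro mult_mono) auto
  then have "0 < mix_floor p" "mix_floor p \<le> 1"
    using \<open>card (V p) > 0\<close> nu_pos q_min_pos[of p] by (auto simp: mix_floor_def divide_le_eq)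
  then have rate: "0 \<le> 1 - mix_floor p ^ mix_len p" "1 - mix_floor p ^ mix_len p < 1"
    by (simp_all add: power_le_one)
  have "2 * mix_len p * pert_gain p \<ge> 0" using L_pos q_min_pos[of p] by (simp add: pert_gain_def)
  note step = spr_contraction[of c, folded p_def]
  have "spr c \<longlonglongrightarrow> 0"
    using contraction_tendsto_zero[OF spr_nonneg rate _ \<open>mix_len p > 0\<close> step gamma_tendsto_zero]
      \<open>2 * mix_len p * pert_gain p \<ge> 0\<close> by simp
  moreover have "summable (\<lambda>t. \<gamma> t * spr c t)"
    using contraction_weighted_summable[OF spr_nonneg rate _ step _ gamma_noninc gamma_sq_sum]
      \<open>2 * mix_len p * pert_gain p \<ge> 0\<close> gamma_pos by (simp add: less_imp_le)
  ultimately show ?thesis ..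
qed

text \<open>Coordinates of blocks without agents get weight 1; their average stays 0.\<close>
definition weight :: "'c \<Rightarrow> real" where
  "weight c = max 1 (real (card (V (blk c))))"

definition avg :: "nat \<Rightarrow> real^'c" where
  "avg t = (\<chi> c. (\<Sum>j\<in>V (blk c). z t j (blk c) $ c) / weight c)"

lemma weight_ge_1: "weight c \<ge> 1"
  by (simp add: weight_def)

lemma sum_w_eq_sum_z: "(\<Sum>i\<in>V p. w (Suc t) i p) = (\<Sum>j\<in>V p. z t j p)"
proof -
  have "(\<Sum>i\<in>V p. w (Suc t) i p) = (\<Sum>i\<in>V p. \<Sum>j\<in>V p. W t p i j *\<^sub>R z t j p)"
    using w_step by simp
  also have "\<dots> = (\<Sum>j\<in>V p. (\<Sum>i\<in>V p. W t p i j) *\<^sub>R z t j p)"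
    by (subst sum.swap) (simp add: scaleR_sum_left)
  also have "\<dots> = (\<Sum>j\<in>V p. z t j p)" using col_stoch by simp
  finally show ?thesis .
qed

text \<open>Since the q's over V_p sum to N_p, the average is a convex combination of the estimates.\<close>
lemma est_near_avg:
  assumes "i \<in> V (blk c)"
  shows "\<bar>est c t i - avg t $ c\<bar> \<le> spr c t"
proof -
  define p where "p = blk c"
  have "card (V p) > 0" using assms by (auto simp: p_def card_gt_0_iff)
  then have "weight c = card (V p)" by (simp add: weight_def p_def)
  have "(\<Sum>j\<in>V p. z t j p $ c) = (\<Sum>j\<in>V p. w (Suc t) j p $ c)"
    using sum_w_eq_sum_z[where p = p and t = t] by (metis sum_component)
  then have "avg t $ c = (\<Sum>j\<in>V p. w (Suc t) j p $ c) / weight c" by (simp add: avg_def p_def)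
  also have "\<dots> = (\<Sum>j\<in>V p. q (Suc t) j p / weight c * est c t j)"
    by (simp add: sum_divide_distrib w_eq_q_scaleR_y est_def p_def cong: sum.cong)
  finally have "avg t $ c = \<dots>" .
  moreover have "(\<Sum>j\<in>V p. q (Suc t) j p / weight c) = 1"
    using q_sum_eq_card \<open>weight c = card (V p)\<close> assms weight_ge_1[of c]
    by (auto simp: sum_divide_distrib[symmetric] p_def)
  ultimately show ?thesis
    using abs_diff_convex_comb_le_spread[of "V p" i "\<lambda>j. q (Suc t) j p / weight c" "est c t"]
      assms q_pos weight_ge_1[of c] by (simp add: spr_def p_def less_imp_le)
qed

lemma G_component_eq_0: "blk c \<notin> N j \<Longrightarrow> G (Suc t) j $ c = 0"
  by (rule subgradient_component_eq_0[OF G_subgrad, where P = "\<lambda>c. blk c \<in> N j"]) (auto intro: depends)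

definition G_sum :: "nat \<Rightarrow> real^'c" where
  "G_sum t = (\<Sum>j\<in>UNIV. G (Suc t) j)"

lemma G_sum_component: "G_sum t $ c = (\<Sum>j\<in>V (blk c). G (Suc t) j $ c)"
  unfolding G_sum_def sum_component
  by (rule sum.mono_neutral_right) (use V_sup[of "blk c"] in \<open>auto intro!: G_component_eq_0\<close>)

lemma avg_step: "avg (Suc t) $ c = avg t $ c - \<gamma> t / weight c * G_sum t $ c"
proof -
  define p where "p = blk c"
  have "(\<Sum>j\<in>V p. z (Suc t) j p $ c) = (\<Sum>j\<in>V p. w (Suc t) j p $ c - \<gamma> t * G (Suc t) j $ c)"
    by (rule sum.cong) (simp_all add: z_step blockproj_def p_def)
  also have "\<dots> = (\<Sum>j\<in>V p. w (Suc t) j p $ c) - \<gamma> t * (\<Sum>j\<in>V p. G (Suc t) j $ c)"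
    by (simp add: sum_subtractf sum_distrib_left)
  also have "(\<Sum>j\<in>V p. w (Suc t) j p $ c) = (\<Sum>j\<in>V p. z t j p $ c)"
    using sum_w_eq_sum_z[where p = p and t = t] by (metis sum_component)
  also have "(\<Sum>j\<in>V p. G (Suc t) j $ c) = G_sum t $ c" by (simp add: G_sum_component p_def)
  finally show ?thesis by (simp add: avg_def p_def diff_divide_distrib)
qed

definition cost :: "real^'c \<Rightarrow> real" where
  "cost v = (\<Sum>i\<in>UNIV. f i v)"

definition disagreement :: "nat \<Rightarrow> real" where
  "disagreement t = (\<Sum>c\<in>UNIV. spr c t)"

text \<open>Agent j evaluates its subgradient at its own estimates, which differ from the average
  only on the blocks j depends on, and there by at most the spread.\<close>
lemma inner_G_ge: "G (Suc t) j \<bullet> (avg t - v) \<ge> f j (avg t) - f j v - 2 * L * disagreement t"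
proof -
  define u where "u = ytil (Suc t) j"
  define \<Delta> where "\<Delta> = (\<Sum>c | blk c \<in> N j. \<bar>avg t $ c - u $ c\<bar>)"
  have "\<Delta> \<le> (\<Sum>c | blk c \<in> N j. spr c t)"
    unfolding \<Delta>_def
  proof (rule sum_mono)
    fix c assume "c \<in> {c. blk c \<in> N j}"
    then have "j \<in> V (blk c)" using V_sup by blast
    then show "\<bar>avg t $ c - u $ c\<bar> \<le> spr c t"
      using est_near_avg[of j c t] ytil_def by (simp add: u_def est_def abs_minus_commute)
  qed
  also have "\<dots> \<le> disagreement t"
    unfolding disagreement_def by (rule sum_mono2) (auto simp: spr_nonneg)
  finally have "\<Delta> \<le> disagreement t" .
  have "f j v \<ge> f j u + G (Suc t) j \<bullet> (v - u)"
    using G_subgrad[where k = t and i = j] unfolding subgradient_def u_def by blast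
  moreover have "G (Suc t) j \<bullet> (v - u) = - (G (Suc t) j \<bullet> (u - v))" by (simp add: inner_diff_right)
  moreover have "\<bar>G (Suc t) j \<bullet> (avg t - u)\<bar> \<le> L * \<Delta>"
    using abs_inner_le_sum_support[of "\<lambda>c. blk c \<in> N j" "G (Suc t) j" L "avg t - u"]
      G_component_eq_0 G_component_le by (simp add: \<Delta>_def)
  moreover have "f j (avg t) - f j u \<le> L * \<Delta>"
    unfolding \<Delta>_def by (rule convex_diff_le_dependent_coords[OF convex depends subgrad_bound])
  moreover have "G (Suc t) j \<bullet> (avg t - v) = G (Suc t) j \<bullet> (u - v) + G (Suc t) j \<bullet> (avg t - u)"
    by (simp add: inner_diff_right)
  moreover have "L * \<Delta> \<le> L * disagreement t" using \<open>\<Delta> \<le> disagreement t\<close> L_pos by simp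
  ultimately show ?thesis by (simp add: abs_le_iff)
qed

definition descent_error :: "nat \<Rightarrow> real" where
  "descent_error t = 4 * CARD('a) * L * \<gamma> t * disagreement t + (\<gamma> t)\<^sup>2 * (CARD('c) * (CARD('a) * L)\<^sup>2)"

lemma G_sum_component_le: "\<bar>G_sum t $ c\<bar> \<le> CARD('a) * L"
proof -
  have "\<bar>G_sum t $ c\<bar> \<le> (\<Sum>j\<in>UNIV. \<bar>G (Suc t) j $ c\<bar>)" unfolding G_sum_def sum_component by (rule sum_abs)
  also have "\<dots> \<le> (\<Sum>j\<in>(UNIV::'a set). L)" by (rule sum_mono) (rule G_component_le)
  finally show ?thesis by simp
qed

lemma inner_G_sum_ge: "G_sum t \<bullet> (avg t - v) \<ge> cost (avg t) - cost v - 2 * CARD('a) * L * disagreement t"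
proof -
  have "(\<Sum>j\<in>(UNIV::'a set). f j (avg t) - f j v - 2 * L * disagreement t)
      \<le> (\<Sum>j\<in>UNIV. G (Suc t) j \<bullet> (avg t - v))"
    by (rule sum_mono) (rule inner_G_ge)
  moreover have "(\<Sum>j\<in>(UNIV::'a set). f j (avg t) - f j v - 2 * L * disagreement t)
      = cost (avg t) - cost v - 2 * CARD('a) * L * disagreement t"
    by (simp add: cost_def sum_subtractf)
  moreover have "(\<Sum>j\<in>UNIV. G (Suc t) j \<bullet> (avg t - v)) = G_sum t \<bullet> (avg t - v)"
    by (simp add: G_sum_def inner_sum_left)
  ultimately show ?thesis by simp
qed

lemma wdist_avg_step:
  "wdist weight (avg (Suc t)) v = wdist weight (avg t) v - 2 * \<gamma> t * (G_sum t \<bullet> (avg t - v))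
     + (\<gamma> t)\<^sup>2 * (\<Sum>c\<in>UNIV. (G_sum t $ c)\<^sup>2 / weight c)"
proof -
  have "weight c * (avg (Suc t) $ c - v $ c)\<^sup>2 = weight c * (avg t $ c - v $ c)\<^sup>2
      - 2 * \<gamma> t * (G_sum t $ c * (avg t $ c - v $ c)) + (\<gamma> t)\<^sup>2 * ((G_sum t $ c)\<^sup>2 / weight c)" for c
    using weight_ge_1[of c] by (simp add: avg_step field_simps power2_eq_square)
  then show ?thesis
    by (simp add: wdist_def inner_vec_def sum.distrib sum_subtractf sum_distrib_left)
qed

lemma avg_descent:
  "wdist weight (avg (Suc t)) v \<le> wdist weight (avg t) v - 2 * \<gamma> t * (cost (avg t) - cost v) + descent_error t"
proof -
  have "(G_sum t $ c)\<^sup>2 / weight c \<le> (CARD('a) * L)\<^sup>2" for c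
  proof -
    have "(G_sum t $ c)\<^sup>2 \<le> (CARD('a) * L)\<^sup>2"
      using power_mono[OF G_sum_component_le[of t c] abs_ge_zero, of 2] by simp
    moreover have "(G_sum t $ c)\<^sup>2 / weight c \<le> (G_sum t $ c)\<^sup>2"
      using weight_ge_1[of c] by (simp add: divide_le_eq mult_le_cancel_left1)
    ultimately show ?thesis by linarith
  qed
  then have "(\<Sum>c\<in>UNIV. (G_sum t $ c)\<^sup>2 / weight c) \<le> CARD('c) * (CARD('a) * L)\<^sup>2"
    using sum_mono[of UNIV "\<lambda>c. (G_sum t $ c)\<^sup>2 / weight c" "\<lambda>c. (CARD('a) * L)\<^sup>2"] by simp
  then have "(\<gamma> t)\<^sup>2 * (\<Sum>c\<in>UNIV. (G_sum t $ c)\<^sup>2 / weight c) \<le> (\<gamma> t)\<^sup>2 * (CARD('c) * (CARD('a) * L)\<^sup>2)"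
    by (rule mult_left_mono) simp
  moreover have "2 * \<gamma> t * (cost (avg t) - cost v - 2 * CARD('a) * L * disagreement t)
      \<le> 2 * \<gamma> t * (G_sum t \<bullet> (avg t - v))"
    using inner_G_sum_ge gamma_pos[of t] by (intro mult_left_mono) auto
  ultimately show ?thesis
    unfolding wdist_avg_step descent_error_def by (simp add: algebra_simps)
qed

lemma summable_descent_error: "summable descent_error"
proof -
  have "summable (\<lambda>t. \<gamma> t * disagreement t)"
    using spr_tendsto_zero_and_summable
    by (simp add: disagreement_def sum_distrib_left summable_sum)
  then have "summable (\<lambda>t. (4 * CARD('a) * L) * (\<gamma> t * disagreement t)
      + (CARD('c) * (CARD('a) * L)\<^sup>2) * (\<gamma> t)\<^sup>2)"
    using gamma_sq_sum by (intro summable_add summable_mult)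
  then show ?thesis unfolding descent_error_def[abs_def] by (simp add: algebra_simps)
qed

lemma avg_converges_to_minimizer: "\<exists>x. (\<forall>y. cost x \<le> cost y) \<and> avg \<longlonglongrightarrow> x"
proof (rule quasi_fejer_converges_to_minimizer[where \<beta> = descent_error])
  show "weight c > 0" for c using weight_ge_1[of c] by simp
  show "continuous_on UNIV cost"
    unfolding cost_def by (intro continuous_on_sum convex_on_continuous[OF open_UNIV convex])
  show "\<exists>x. \<forall>y. cost x \<le> cost y" using solvable by (simp add: cost_def)
  show "descent_error t \<ge> 0" for t
    using gamma_pos[of t] L_pos spr_nonneg
    by (simp add: descent_error_def disagreement_def sum_nonneg)
qed (use avg_descent summable_descent_error gamma_pos gamma_nonsum in auto)

lemma estimates_converge:
  assumes "avg \<longlonglongrightarrow> x" and "i \<in> V p"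
  shows "(\<lambda>k. blockproj blk p (y k i p)) \<longlonglongrightarrow> blockproj blk p x"
proof (rule vec_tendstoI)
  fix c
  show "(\<lambda>k. blockproj blk p (y k i p) $ c) \<longlonglongrightarrow> blockproj blk p x $ c"
  proof (cases "blk c = p")
    case True
    have "(\<lambda>t. est c t i - avg t $ c) \<longlonglongrightarrow> 0"
    proof (rule Lim_null_comparison)
      show "\<forall>\<^sub>F t in sequentially. norm (est c t i - avg t $ c) \<le> spr c t"
        using est_near_avg[of i c] assms(2) True by simp
    qed (use spr_tendsto_zero_and_summable in blast)
    then have "(\<lambda>t. (est c t i - avg t $ c) + avg t $ c) \<longlonglongrightarrow> 0 + x $ c"
      using assms(1) by (intro tendsto_add tendsto_vec_nth)
    then have "(\<lambda>t. y (Suc t) i p $ c) \<longlonglongrightarrow> x $ c" by (simp add: est_def True)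
    then have "(\<lambda>k. y k i p $ c) \<longlonglongrightarrow> x $ c" by (rule LIMSEQ_imp_Suc)
    then show ?thesis by (simp add: blockproj_def True)
  qed (simp add: blockproj_def)
qed

end

theorem theorem4:
  fixes f :: "'a::finite \<Rightarrow> real^'c::finite \<Rightarrow> real"
    and blk :: "'c \<Rightarrow> 'p::finite"
    and N :: "'a \<Rightarrow> 'p set"
    and V :: "'p \<Rightarrow> 'a set"
    and E :: "nat \<Rightarrow> 'p \<Rightarrow> ('a \<times> 'a) set"
    and W :: "nat \<Rightarrow> 'p \<Rightarrow> 'a \<Rightarrow> 'a \<Rightarrow> real"
    and \<nu> L :: real and Q :: nat
    and \<gamma> :: "nat \<Rightarrow> real"
    and q :: "nat \<Rightarrow> 'a \<Rightarrow> 'p \<Rightarrow> real"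
    and w y z :: "nat \<Rightarrow> 'a \<Rightarrow> 'p \<Rightarrow> real^'c"
    and ytil G :: "nat \<Rightarrow> 'a \<Rightarrow> real^'c"
  assumes solvable: "\<exists>ys. \<forall>y'. (\<Sum>i\<in>UNIV. f i ys) \<le> (\<Sum>i\<in>UNIV. f i y')"
    and depends: "\<And>i u v. (\<forall>c. blk c \<in> N i \<longrightarrow> u $ c = v $ c) \<Longrightarrow> f i u = f i v"
    and V_sup: "\<And>p. {i. p \<in> N i} \<subseteq> V p"
    and E_sub: "\<And>k p. E k p \<subseteq> V p \<times> V p"
    and W_edge: "\<And>k p i j. i \<in> V p \<Longrightarrow> j \<in> V p \<Longrightarrow> (j, i) \<in> E k p \<Longrightarrow> W k p i j > 0"
    and W_noedge: "\<And>k p i j. i \<in> V p \<Longrightarrow> j \<in> V p \<Longrightarrow> (j, i) \<notin> E k p \<Longrightarrow> W k p i j = 0"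
    and selfloop: "\<And>k p i. i \<in> V p \<Longrightarrow> (i, i) \<in> E k p"
    and col_stoch: "\<And>k p j. j \<in> V p \<Longrightarrow> (\<Sum>i\<in>V p. W k p i j) = 1"
    and nu_pos: "\<nu> > 0"
    and W_lb: "\<And>k p i j. (j, i) \<in> E k p \<Longrightarrow> W k p i j \<ge> \<nu>"
    and Q_pos: "Q > 0"
    and strongly_conn: "\<And>p k i j. i \<in> V p \<Longrightarrow> j \<in> V p \<Longrightarrow>
          (i, j) \<in> (\<Union>t\<in>{k*Q..<(Suc k)*Q}. E t p)\<^sup>*"
    and convex: "\<And>i. convex_on UNIV (f i)"
    and L_pos: "L > 0"
    and subgrad_bound: "\<And>i u g. subgradient (f i) u g \<Longrightarrow> norm g \<le> L"
    and gamma_pos: "\<And>k. \<gamma> k > 0"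
    and gamma_noninc: "\<And>k. \<gamma> (Suc k) \<le> \<gamma> k"
    and gamma_nonsum: "\<not> summable \<gamma>"
    and gamma_sq_sum: "summable (\<lambda>k. (\<gamma> k)\<^sup>2)"
    and q_init: "\<And>p i. i \<in> V p \<Longrightarrow> q 0 i p = 1"
    and q_step: "\<And>k p i. i \<in> V p \<Longrightarrow> q (Suc k) i p = (\<Sum>j\<in>V p. W k p i j * q k j p)"
    and w_step: "\<And>k p i. i \<in> V p \<Longrightarrow> w (Suc k) i p = (\<Sum>j\<in>V p. W k p i j *\<^sub>R z k j p)"
    and y_step: "\<And>k p i. i \<in> V p \<Longrightarrow> y (Suc k) i p = (1 / q (Suc k) i p) *\<^sub>R w (Suc k) i p"
    and ytil_def: "\<And>k i c. i \<in> V (blk c) \<Longrightarrow> ytil k i $ c = y k i (blk c) $ c"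
    and G_subgrad: "\<And>k i. subgradient (f i) (ytil (Suc k) i) (G (Suc k) i)"
    and z_step: "\<And>k p i. i \<in> V p \<Longrightarrow>
          z (Suc k) i p = w (Suc k) i p - \<gamma> k *\<^sub>R blockproj blk p (G (Suc k) i)"
  shows "\<exists>ys. (\<forall>y'. (\<Sum>i\<in>UNIV. f i ys) \<le> (\<Sum>i\<in>UNIV. f i y')) \<and>
           (\<forall>p. \<forall>i\<in>V p. (\<lambda>k. blockproj blk p (y k i p)) \<longlonglongrightarrow> blockproj blk p ys)"
proof -
  interpret push_sum_subgradient f blk N V E W \<nu> L Q \<gamma> q w y z ytil G
    by (rule push_sum_subgradient.intro[OF assms])
  obtain x where "\<forall>y'. cost x \<le> cost y'" and "avg \<longlonglongrightarrow> x"
    using avg_converges_to_minimizer by blast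
  then show ?thesis using estimates_converge unfolding cost_def by blast
qed

end
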